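(* Fix an iteration $t$ and a slicing set $\mathcal U=\{u_i\}_{i=1}^m\subset\mathbb S^{d-1}$. Assume per-example gradients are $\ell_2$-clipped at radius $C>0$, the minibatch size $B_t\ge1$ is deterministic, and the slice-wise Lipschitz condition holds with constants $\{L_{t,i}\}_{i=1}^m$. Let $\overline K_t^2$ be a scalar such that for all $\theta\in\Theta$, $(s_i,s_j)\in\mathcal Q$, histories $y_{<t}$ in the support and couplings $\gamma\in\Pi(\mu^\theta_{s_i},\mu^\theta_{s_j})$, for $\gamma$-almost every $(X,X')$, $\mathbb E_{R_t}[K_t(X,X';R_t)^2]\le\overline K_t^2$. Then the vector $h^{\mathsf{sa}}_t=(h^{\mathsf{sa}}_{t,i})_{i=1}^m$ with \[ h^{\mathsf{sa}}_{t,i}:=\left(\frac{2L_{t,i}C}{B_t}\right)^2\overline K_t^2 \] is a valid subsampling-aware HUC (sa-HUC) for $\mathcal U$ at iteration $t$.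
   Context: Pufferfish scenario $(\mathcal S,\mathcal Q,\Theta)$: each $\theta\in\Theta$ is a joint law of a secret $S$ and a dataset $X=(X_1,\dots,X_n)\in\bar{\mathcal X}^n$; $\mu^\theta_s$ is the law of $X$ given $S=s$ under $\theta$; $\Pi(\mu,\nu)$ denotes couplings. At iteration $t$, subsampling randomness $R_t\sim\mathbb P_{\eta,\rho}$ (independent of data and secret) selects an index (multi)set $\mathsf I_t(R_t)\subseteq[n]$ of size $B_t$. A history $y_{<t}$ contains the parameter $\xi_{t-1}$. Clipped per-example gradients $\tilde g_t(x_j)=g_t(x_j)\min\{1,C/\|g_t(x_j)\|_2\}$ with $g_t(x_j)=\nabla_\xi\ell(\xi_{t-1};x_j)$; $\bar g_t(x;r)=\frac1{B_t}\sum_{j\in\mathsf I_t(r)}\tilde g_t(x_j)$; pre-noise update $f_t(x,y_{<t};r)=T_t(\bar g_t(x;r);y_{<t})$ with update map $T_t$. Discrepancy $K_t(x,x';r)=\sum_{j\in\mathsf I_t(r)}\mathbf 1\{x_j\ne x'_j\}$. Slice-wise Lipschitz condition: $|u_i^\top(T_t(z;y_{<t})-T_t(z';y_{<t}))|\le L_{t,i}|u_i^\top(z-z')|$ for all $z,z'$ and histories $y_{<t}$ in the support. sa-HUC: $h^{\mathsf{sa}}_t\in\mathbb R^m_+$ is an sa-HUC for $\mathcal U$ at iteration $t$ if for all $\theta\in\Theta$, $(s_i,s_j)\in\mathcal Q$, histories $y_{<t}$ in the support and every coupling $\gamma\in\Pi(\mu^\theta_{s_i},\mu^\theta_{s_j})$,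 for $\gamma$-almost every $(X,X')$ and all $i\in[m]$, $\mathbb E_{R_t}[|\langle f_t(X,y_{<t};R_t)-f_t(X',y_{<t};R_t),u_i\rangle|^2]\le h^{\mathsf{sa}}_{t,i}$, the expectation being only over $R_t\sim\mathbb P_{\eta,\rho}$. *)

theory Defs
  imports "HOL-Probability.Probability"
begin

definition clip :: "real \<Rightarrow> 'a::real_normed_vector \<Rightarrow> 'a" where
  "clip C g = min 1 (C / norm g) *\<^sub>R g"

text \<open>Minibatch mean of clipped per-example gradients over the index multiset I r.
  grad xi x is the per-example gradient of the loss at parameter xi on example x;
  param y is the parameter xi_{t-1} contained in the history y.\<close>
definition minibatch_grad ::
  "('a::real_normed_vector \<Rightarrow> 'x \<Rightarrow> 'a) \<Rightarrow> real \<Rightarrow> ('r \<Rightarrow> nat multiset) \<Rightarrow> nat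
    \<Rightarrow> (nat \<Rightarrow> 'x) \<Rightarrow> 'a \<Rightarrow> 'r \<Rightarrow> 'a" where
  "minibatch_grad grad C I B X xi r =
     (1 / real B) *\<^sub>R (\<Sum>\<^sub># (image_mset (\<lambda>j. clip C (grad xi (X j))) (I r)))"

definition pre_update ::
  "('y \<Rightarrow> 'a \<Rightarrow> 'a) \<Rightarrow> ('y \<Rightarrow> 'a) \<Rightarrow> ('a::real_normed_vector \<Rightarrow> 'x \<Rightarrow> 'a) \<Rightarrow> real
    \<Rightarrow> ('r \<Rightarrow> nat multiset) \<Rightarrow> nat \<Rightarrow> (nat \<Rightarrow> 'x) \<Rightarrow> 'y \<Rightarrow> 'r \<Rightarrow> 'a" where
  "pre_update T param grad C I B X y r = T y (minibatch_grad grad C I B X (param y) r)"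

definition discrepancy :: "('r \<Rightarrow> nat multiset) \<Rightarrow> (nat \<Rightarrow> 'x) \<Rightarrow> (nat \<Rightarrow> 'x) \<Rightarrow> 'r \<Rightarrow> nat" where
  "discrepancy I X X' r = size (filter_mset (\<lambda>j. X j \<noteq> X' j) (I r))"

definition coupling :: "('a \<times> 'b) measure \<Rightarrow> 'a measure \<Rightarrow> 'b measure \<Rightarrow> bool" where
  "coupling \<gamma> \<mu> \<nu> \<longleftrightarrow> prob_space \<gamma> \<and> sets \<gamma> = sets (\<mu> \<Otimes>\<^sub>M \<nu>)
     \<and> distr \<gamma> \<mu> fst = \<mu> \<and> distr \<gamma> \<nu> snd = \<nu>"

text \<open>Theta: scenario distributions, Q: discriminative pairs,
  mu th s: law of the dataset given S = s under th, Ysupp: histories in the support,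
  P: law of R_t, f: pre-noise update, U i (i < m): slicing directions, h: candidate vector.\<close>
definition sa_HUC ::
  "'th set \<Rightarrow> ('s \<times> 's) set \<Rightarrow> ('th \<Rightarrow> 's \<Rightarrow> (nat \<Rightarrow> 'x) measure) \<Rightarrow> 'y set \<Rightarrow> 'r measure
    \<Rightarrow> ((nat \<Rightarrow> 'x) \<Rightarrow> 'y \<Rightarrow> 'r \<Rightarrow> 'a::real_inner) \<Rightarrow> (nat \<Rightarrow> 'a) \<Rightarrow> nat \<Rightarrow> (nat \<Rightarrow> real) \<Rightarrow> bool" where
  "sa_HUC Theta Q mu Ysupp P f U m h \<longleftrightarrow>
     (\<forall>i<m. 0 \<le> h i) \<and>
     (\<forall>th\<in>Theta. \<forall>si sj. (si, sj) \<in> Q \<longrightarrow> (\<forall>y\<in>Ysupp. \<forall>\<gamma>. coupling \<gamma> (mu th si) (mu th sj) \<longrightarrow>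
        (AE p in \<gamma>. \<forall>i<m.
           (\<integral>\<^sup>+ r. ennreal ((\<bar>(f (fst p) y r - f (snd p) y r) \<bullet> U i\<bar>)\<^sup>2) \<partial>P) \<le> ennreal (h i))))"

end

theory Submission
  imports Defs
begin

text \<open>Clipping bounds every per-example contribution by \<open>C\<close>, so the minibatch means of two
  datasets differ in norm by at most \<open>2 C K / B\<close>, where \<open>K\<close> counts the selected indices at
  which the datasets differ. The slice-wise Lipschitz property of the update map and
  Cauchy-Schwarz transfer this bound to every slice; squaring and integrating over the
  subsampling randomness turns the second-moment bound on \<open>K\<close> into the claimed bound. The
  pointwise bound holds for every outcome \<open>r\<close>, so apart from measurability of the index
  selection no property of the subsampling law is needed.\<close>

lemma norm_clip_le:
  assumes "C \<ge> 0"
  shows "norm (clip C g) \<le> C"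
proof (cases "g = 0")
  case True
  then show ?thesis using assms by (simp add: clip_def)
next
  case False
  then have "norm g > 0" by simp
  have "norm (clip C g) = min 1 (C / norm g) * norm g"
    using assms \<open>norm g > 0\<close> by (simp add: clip_def)
  also have "\<dots> \<le> C / norm g * norm g"
    using \<open>norm g > 0\<close> by (intro mult_right_mono) auto
  also have "\<dots> = C" using \<open>norm g > 0\<close> by simp
  finally show ?thesis .
qed

lemma norm_clip_diff_le:
  assumes "C \<ge> 0"
  shows "norm (clip C g - clip C g') \<le> 2 * C"
  using norm_triangle_ineq4[of "clip C g" "clip C g'"] norm_clip_le[OF assms, of g]
    norm_clip_le[OF assms, of g'] by linarith

lemma norm_sum_mset_image_diff_le:
  fixes f g :: "'b \<Rightarrow> 'a::real_normed_vector"
  assumes "\<And>j. j \<in># M \<Longrightarrow> \<not> Q j \<Longrightarrow> f j = g j"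
    and "\<And>j. j \<in># M \<Longrightarrow> norm (f j - g j) \<le> c"
  shows "norm (\<Sum>\<^sub># (image_mset f M) - \<Sum>\<^sub># (image_mset g M)) \<le> c * real (size (filter_mset Q M))"
  using assms
proof (induction M)
  case empty
  then show ?case by simp
next
  case (add x M)
  have IH: "norm (\<Sum>\<^sub># (image_mset f M) - \<Sum>\<^sub># (image_mset g M)) \<le> c * real (size (filter_mset Q M))"
    using add.prems by (intro add.IH) auto
  have step: "norm (f x - g x) \<le> (if Q x then c else 0)"
    using add.prems by auto
  have "norm (\<Sum>\<^sub># (image_mset f (add_mset x M)) - \<Sum>\<^sub># (image_mset g (add_mset x M)))
      = norm ((f x - g x) + (\<Sum>\<^sub># (image_mset f M) - \<Sum>\<^sub># (image_mset g M)))"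
    by (simp add: algebra_simps)
  also have "\<dots> \<le> norm (f x - g x) + norm (\<Sum>\<^sub># (image_mset f M) - \<Sum>\<^sub># (image_mset g M))"
    by (rule norm_triangle_ineq)
  also have "\<dots> \<le> (if Q x then c else 0) + c * real (size (filter_mset Q M))"
    using step IH by linarith
  also have "\<dots> = c * real (size (filter_mset Q (add_mset x M)))"
    by (simp add: algebra_simps)
  finally show ?case .
qed

text \<open>No assumption on \<open>B\<close> is needed: for \<open>B = 0\<close> both sides are \<open>0\<close> since \<open>x / 0 = 0\<close>.\<close>

lemma norm_minibatch_grad_diff_le:
  assumes "C \<ge> 0"
  shows "norm (minibatch_grad grad C I B X xi r - minibatch_grad grad C I B X' xi r)
    \<le> 2 * C * real (discrepancy I X X' r) / real B"
proof -
  have "norm (\<Sum>\<^sub># (image_mset (\<lambda>j. clip C (grad xi (X j))) (I r))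
          - \<Sum>\<^sub># (image_mset (\<lambda>j. clip C (grad xi (X' j))) (I r)))
      \<le> 2 * C * real (discrepancy I X X' r)"
    unfolding discrepancy_def
    by (rule norm_sum_mset_image_diff_le) (auto intro: norm_clip_diff_le[OF assms])
  then show ?thesis
    by (simp add: minibatch_grad_def divide_right_mono flip: scaleR_diff_right)
qed

lemma abs_inner_diff_le_slice_lipschitz:
  fixes u :: "'a::real_inner"
  assumes slice_lipschitz: "\<bar>u \<bullet> (S z - S z')\<bar> \<le> L * \<bar>u \<bullet> (z - z')\<bar>"
    and "norm u \<le> 1"
  shows "\<bar>u \<bullet> (S z - S z')\<bar> \<le> \<bar>L\<bar> * norm (z - z')"
proof -
  have "\<bar>u \<bullet> (z - z')\<bar> \<le> norm (z - z')"
    using Cauchy_Schwarz_ineq2[of u "z - z'"] \<open>norm u \<le> 1\<close>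
    by (meson mult_left_le_one_le norm_ge_zero order_trans)
  then have "L * \<bar>u \<bullet> (z - z')\<bar> \<le> \<bar>L\<bar> * norm (z - z')"
    by (meson abs_ge_self abs_ge_zero mult_mono order_trans)
  with slice_lipschitz show ?thesis by linarith
qed

lemma power2_abs_inner_pre_update_diff_le:
  assumes "C \<ge> 0" and "norm u \<le> 1"
    and slice_lipschitz: "\<And>z z'. \<bar>u \<bullet> (T y z - T y z')\<bar> \<le> L * \<bar>u \<bullet> (z - z')\<bar>"
  shows "(\<bar>(pre_update T param grad C I B X y r - pre_update T param grad C I B X' y r) \<bullet> u\<bar>)\<^sup>2
    \<le> (2 * L * C / real B)\<^sup>2 * (real (discrepancy I X X' r))\<^sup>2"
proof -
  let ?z = "minibatch_grad grad C I B X (param y) r"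
  let ?z' = "minibatch_grad grad C I B X' (param y) r"
  have "\<bar>(pre_update T param grad C I B X y r - pre_update T param grad C I B X' y r) \<bullet> u\<bar>
      = \<bar>u \<bullet> (T y ?z - T y ?z')\<bar>"
    by (simp add: pre_update_def inner_commute)
  also have "\<dots> \<le> \<bar>L\<bar> * norm (?z - ?z')"
    using slice_lipschitz \<open>norm u \<le> 1\<close> by (rule abs_inner_diff_le_slice_lipschitz)
  also have "\<dots> \<le> \<bar>L\<bar> * (2 * C * real (discrepancy I X X' r) / real B)"
    using norm_minibatch_grad_diff_le[OF \<open>C \<ge> 0\<close>] by (rule mult_left_mono) simp
  also have "\<dots> = \<bar>2 * L * C / real B * real (discrepancy I X X' r)\<bar>"
    using \<open>C \<ge> 0\<close> by (simp add: abs_mult)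
  finally show ?thesis
    by (metis abs_ge_zero power2_abs power_mono power_mult_distrib)
qed

lemma measurable_discrepancy [measurable]:
  assumes "I \<in> measurable M (count_space UNIV)"
  shows "discrepancy I X X' \<in> measurable M (count_space UNIV)"
  using measurable_compose[OF assms
      measurable_count_space[of "\<lambda>J. size (filter_mset (\<lambda>j. X j \<noteq> X' j) J)"]]
  by (simp add: discrepancy_def[abs_def])

lemma nn_integral_le_cmult_bound:
  assumes "g \<in> borel_measurable M"
    and pointwise: "\<And>x. x \<in> space M \<Longrightarrow> f x \<le> c * g x"
    and "c \<ge> 0"
    and moment: "(\<integral>\<^sup>+ x. ennreal (g x) \<partial>M) \<le> ennreal K"
  shows "(\<integral>\<^sup>+ x. ennreal (f x) \<partial>M) \<le> ennreal (c * K)"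
proof -
  have "(\<integral>\<^sup>+ x. ennreal (f x) \<partial>M) \<le> (\<integral>\<^sup>+ x. ennreal c * ennreal (g x) \<partial>M)"
    using pointwise \<open>c \<ge> 0\<close> by (intro nn_integral_mono) (simp add: ennreal_leI flip: ennreal_mult')
  also have "\<dots> = ennreal c * (\<integral>\<^sup>+ x. ennreal (g x) \<partial>M)"
    using assms(1) by (intro nn_integral_cmult) measurable
  also have "\<dots> \<le> ennreal c * ennreal K"
    using moment by (rule mult_left_mono) simp
  also have "\<dots> = ennreal (c * K)"
    using \<open>c \<ge> 0\<close> by (simp add: ennreal_mult')
  finally show ?thesis .
qed

theorem proposition3:
  fixes Theta :: "'th set" and Q :: "('s \<times> 's) set"
    and mu :: "'th \<Rightarrow> 's \<Rightarrow> (nat \<Rightarrow> 'x) measure"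
    and Ysupp :: "'y set" and P :: "'r measure"
    and I :: "'r \<Rightarrow> nat multiset" and n B :: nat
    and T :: "'y \<Rightarrow> 'a::euclidean_space \<Rightarrow> 'a" and param :: "'y \<Rightarrow> 'a"
    and grad :: "'a \<Rightarrow> 'x \<Rightarrow> 'a" and C :: real
    and U :: "nat \<Rightarrow> 'a" and m :: nat and L :: "nat \<Rightarrow> real" and Kbar2 :: real
  assumes P_prob: "prob_space P"
    and I_meas: "I \<in> measurable P (count_space UNIV)"
    and I_range: "\<And>r. r \<in> space P \<Longrightarrow> set_mset (I r) \<subseteq> {..<n}"
    and batch_size: "\<And>r. r \<in> space P \<Longrightarrow> size (I r) = B"
    and B_pos: "B \<ge> 1"
    and C_pos: "C > 0"
    and unit: "\<And>i. i < m \<Longrightarrow> norm (U i) = 1"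
    and lipschitz: "\<And>i y z z'. i < m \<Longrightarrow> y \<in> Ysupp \<Longrightarrow>
        \<bar>U i \<bullet> (T y z - T y z')\<bar> \<le> L i * \<bar>U i \<bullet> (z - z')\<bar>"
    and Kbar_nonneg: "Kbar2 \<ge> 0"
    and Kbar: "\<And>th si sj y \<gamma>. th \<in> Theta \<Longrightarrow> (si, sj) \<in> Q \<Longrightarrow> y \<in> Ysupp \<Longrightarrow>
        coupling \<gamma> (mu th si) (mu th sj) \<Longrightarrow>
        (AE p in \<gamma>. (\<integral>\<^sup>+ r. ennreal ((real (discrepancy I (fst p) (snd p) r))\<^sup>2) \<partial>P) \<le> ennreal Kbar2)"
  shows "sa_HUC Theta Q mu Ysupp P (pre_update T param grad C I B) U m
           (\<lambda>i. (2 * L i * C / real B)\<^sup>2 * Kbar2)"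
  unfolding sa_HUC_def
proof (intro conjI ballI allI impI)
  fix i assume "i < m"
  show "0 \<le> (2 * L i * C / real B)\<^sup>2 * Kbar2" using Kbar_nonneg by simp
next
  fix th si sj y \<gamma>
  assume "th \<in> Theta" "(si, sj) \<in> Q" "y \<in> Ysupp" "coupling \<gamma> (mu th si) (mu th sj)"
  from Kbar[OF this] show "AE p in \<gamma>. \<forall>i<m.
      (\<integral>\<^sup>+ r. ennreal ((\<bar>(pre_update T param grad C I B (fst p) y r
                              - pre_update T param grad C I B (snd p) y r) \<bullet> U i\<bar>)\<^sup>2) \<partial>P)
      \<le> ennreal ((2 * L i * C / real B)\<^sup>2 * Kbar2)"
  proof (elim eventually_mono, intro allI impI)
    fix p :: "(nat \<Rightarrow> 'x) \<times> (nat \<Rightarrow> 'x)" and i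
    assume moment: "(\<integral>\<^sup>+ r. ennreal ((real (discrepancy I (fst p) (snd p) r))\<^sup>2) \<partial>P) \<le> ennreal Kbar2"
      and "i < m"
    have "(\<bar>(pre_update T param grad C I B (fst p) y r - pre_update T param grad C I B (snd p) y r) \<bullet> U i\<bar>)\<^sup>2
        \<le> (2 * L i * C / real B)\<^sup>2 * (real (discrepancy I (fst p) (snd p) r))\<^sup>2" for r
      using C_pos unit[OF \<open>i < m\<close>] lipschitz[OF \<open>i < m\<close> \<open>y \<in> Ysupp\<close>]
      by (intro power2_abs_inner_pre_update_diff_le) auto
    with I_meas moment show "(\<integral>\<^sup>+ r. ennreal ((\<bar>(pre_update T param grad C I B (fst p) y r
                              - pre_update T param grad C I B (snd p) y r) \<bullet> U i\<bar>)\<^sup>2) \<partial>P)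
      \<le> ennreal ((2 * L i * C / real B)\<^sup>2 * Kbar2)"
      by (intro nn_integral_le_cmult_bound) auto
  qed
qed

end
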